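(* For every $n\ge1$, the map $S\mapsto[\mathrm{D}(S),\mathrm{E}(S)]$ is a bijection from the set $\mathcal{S}_n$ of sticky trees with $n$ edges onto the set of intervals of the Tamari lattice of order $n$.
   Context: Sticky trees: a plane tree is a rooted tree in which the children of every node are linearly ordered (left to right). The root has depth $0$, a child of a node of depth $d$ has depth $d+1$. The prefix order is: the root, followed by the prefix order of the subtree of its leftmost child, then of its second child, and so on. $S_u$ denotes the subtree rooted at $u$. A sticky tree is a plane tree $S$ with node set $V$ and a labeling $\ell:V\to\mathbb{N}$ such that: (1) every node $u$ of depth $d$ has $0\le\ell(u)\le d$; (2) every node $u$ of depth $d>0$ has some $v\in S_u$ (possibly $v=u$) with $\ell(v)<d$; (3) for every node $u$ of depth $d$, if some $v\in S_u$ has $\ell(v)=d$, then every node of $S_u$ (including $u$) preceding $v$ in prefix order has label at least $d$. The certificate of a non-root node $u$ of depth $d$ is the first node, in prefix order, of $S_u$ whose label is $<d$. The certificate-counting function $c:V\to\mathbb{N}$ assigns to each node $w$ the number of non-root nodes whose certificate is $w$. The words: $\mathrm{E}(S)$ is the word in $\{u,d\}$ obtained by the depth-first traversal of $S$ from the root visiting children left to right, writing $u$ for each move from a node to a child and $d$ for each move back to the parent. If $v_1,\dots,v_n$ are the non-root nodes of $S$ in prefix order, $\mathrm{D}(S)=u\,d^{c(v_1)}\,u\,d^{c(v_2)}\cdots u\,d^{c(v_n)}$. Dyck paths and Tamari lattice: a Dyck path of length $2n$ is a word in $\{u,d\}$ with $n$ letters $u$ and $n$ letters $d$ such that every prefix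 has at least as many $u$'s as $d$'s. The $i$-th letter $u$ of a Dyck path $D$ is matched with the letter $d$ following it such that the factor strictly between them is balanced; $\ell_D(i)$ is the length of that factor. $D\preceq_T E$ iff $\ell_D(i)\le\ell_E(i)$ for all $1\le i\le n$ (Tamari lattice of order $n$); a Tamari interval is a pair $[D,E]$ of Dyck paths of length $2n$ with $D\preceq_T E$. *)

theory Defs
  imports "HOL-Library.Sublist"
begin

datatype ltree = LNode nat "ltree list"

fun lab :: "ltree \<Rightarrow> nat" where
  "lab (LNode l ts) = l"

fun kids :: "ltree \<Rightarrow> ltree list" where
  "kids (LNode l ts) = ts"

text \<open>Nodes are addressed by the list of child indices on the path from the root
(the root is [], its depth is the length of the address).  addrs T lists all nodes
of T in prefix order.\<close>
lemma size_nth_kid[termination_simp]: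
  "x < length ts \<Longrightarrow> size (ts ! x) < Suc (size_list size ts)"
  using size_list_estimation'[OF nth_mem, of x ts "size (ts ! x)" size] by simp

fun addrs :: "ltree \<Rightarrow> nat list list" where
  "addrs (LNode l ts) =
     [] # concat (map (\<lambda>i. map (Cons i) (addrs (ts ! i))) [0..<length ts])"

fun subtree_at :: "ltree \<Rightarrow> nat list \<Rightarrow> ltree" where
  "subtree_at t [] = t"
| "subtree_at t (i # p) = subtree_at (kids t ! i) p"

definition lab_at :: "ltree \<Rightarrow> nat list \<Rightarrow> nat" where
  "lab_at T u = lab (subtree_at T u)"

definition edges :: "ltree \<Rightarrow> nat" where
  "edges T = length (addrs T) - 1"

text \<open>v belongs to the subtree S_u iff u is a prefix of v.  "w precedes v in
prefix order" iff w occurs before v in addrs T.\<close>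
definition sticky :: "ltree \<Rightarrow> bool" where
  "sticky T \<longleftrightarrow>
     (\<forall>u\<in>set (addrs T). lab_at T u \<le> length u) \<and>
     (\<forall>u\<in>set (addrs T). u \<noteq> [] \<longrightarrow>
        (\<exists>v\<in>set (addrs T). prefix u v \<and> lab_at T v < length u)) \<and>
     (\<forall>u\<in>set (addrs T). \<forall>v\<in>set (addrs T).
        prefix u v \<and> lab_at T v = length u \<longrightarrow>
        (\<forall>w\<in>set (takeWhile (\<lambda>x. x \<noteq> v) (addrs T)).
            prefix u w \<longrightarrow> lab_at T w \<ge> length u))"

definition sticky_trees :: "nat \<Rightarrow> ltree set" where
  "sticky_trees n = {T. sticky T \<and> edges T = n}"

definition cert :: "ltree \<Rightarrow> nat list \<Rightarrow> nat list" where
  "cert T u = hd (filter (\<lambda>v. prefix u v \<and> lab_at T v < length u) (addrs T))"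

definition cnt :: "ltree \<Rightarrow> nat list \<Rightarrow> nat" where
  "cnt T w = length (filter (\<lambda>u. u \<noteq> [] \<and> cert T u = w) (addrs T))"

datatype step = U | Dn

fun Ew :: "ltree \<Rightarrow> step list" where
  "Ew (LNode l ts) = concat (map (\<lambda>i. U # Ew (ts ! i) @ [Dn]) [0..<length ts])"

definition Dw :: "ltree \<Rightarrow> step list" where
  "Dw T = concat (map (\<lambda>v. U # replicate (cnt T v) Dn) (tl (addrs T)))"

definition dyck :: "nat \<Rightarrow> step list \<Rightarrow> bool" where
  "dyck n w \<longleftrightarrow> length w = 2 * n \<and> count_list w U = n \<and> count_list w Dn = n \<and>
     (\<forall>k \<le> length w. count_list (take k w) Dn \<le> count_list (take k w) U)"

definition balanced :: "step list \<Rightarrow> bool" where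
  "balanced w \<longleftrightarrow> count_list w U = count_list w Dn \<and>
     (\<forall>k \<le> length w. count_list (take k w) Dn \<le> count_list (take k w) U)"

text \<open>Position (0-based) of the i-th letter U (i counted from 1).\<close>
definition upos :: "step list \<Rightarrow> nat \<Rightarrow> nat" where
  "upos w i = filter (\<lambda>j. w ! j = U) [0..<length w] ! (i - 1)"

definition matchpos :: "step list \<Rightarrow> nat \<Rightarrow> nat" where
  "matchpos w p = (LEAST q. p < q \<and> q < length w \<and> w ! q = Dn \<and>
                      balanced (take (q - Suc p) (drop (Suc p) w)))"

definition ellD :: "step list \<Rightarrow> nat \<Rightarrow> nat" where
  "ellD w i = matchpos w (upos w i) - Suc (upos w i)"

definition tamari_le :: "nat \<Rightarrow> step list \<Rightarrow> step list \<Rightarrow> bool" where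
  "tamari_le n D E \<longleftrightarrow> (\<forall>i\<in>{1..n}. ellD D i \<le> ellD E i)"

definition tamari_intervals :: "nat \<Rightarrow> (step list \<times> step list) set" where
  "tamari_intervals n = {(D, E). dyck n D \<and> dyck n E \<and> tamari_le n D E}"

end

theory Submission
  imports Defs
begin

text \<open>Both words are read through their matchings. In \<open>E(S)\<close> the letter u entering a node \<open>v\<close>
  is matched after the traversal of \<open>S\<^sub>v\<close>, so it encloses a factor of length
  \<open>2(|S\<^sub>v| - 1)\<close>. Number the non-root nodes in prefix order and let \<open>f\<close> send a node to
  its certificate; then \<open>D(S)\<close> has, after its \<open>j\<close>-th u, one d for every \<open>i\<close> with \<open>f(i) = j\<close>.
  Certificates do not cross, so the \<open>i\<close>-th u is matched by the last d following the \<open>f(i)\<close>-th u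
  and encloses a factor of length \<open>2(f(i) - i)\<close>; thus \<open>D(S) \<preceq>\<^sub>T E(S)\<close> says exactly that every
  certificate lies in the subtree of its node. Conversely the labels are recovered from the
  certificates (the label of \<open>w\<close> is the largest depth at which the ancestor of \<open>w\<close> has its
  certificate after \<open>w\<close>), and every non-crossing assignment of certificates inside subtrees of a
  plane tree comes from a sticky labelling. As \<open>E\<close> is a bijection from plane trees onto Dyck
  paths and every Dyck path is the word of a non-crossing \<open>f\<close>, the map is a bijection.\<close>

section \<open>Balanced words\<close>

inductive bal :: "step list \<Rightarrow> bool" where
  bal_Nil: "bal []"
| bal_step: "bal x \<Longrightarrow> bal y \<Longrightarrow> bal (U # x @ Dn # y)"

lemma length_eq_count_U_Dn: "length w = count_list w U + count_list w Dn"
proof (induction w)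
  case (Cons a w) then show ?case by (cases a) auto
qed simp

definition ballot :: "step list \<Rightarrow> bool" where
  "ballot w \<longleftrightarrow> (\<forall>p. prefix p w \<longrightarrow> count_list p Dn \<le> count_list p U)"

lemma prefix_iff_take: "prefix p w \<longleftrightarrow> length p \<le> length w \<and> take (length p) w = p"
  by (metis prefix_def append_eq_conv_conj prefix_length_le)

lemma ballot_iff_take:
  "ballot w \<longleftrightarrow> (\<forall>k \<le> length w. count_list (take k w) Dn \<le> count_list (take k w) U)"
  unfolding ballot_def by (metis prefix_iff_take length_take min.absorb2 take_is_prefix)

lemma balanced_iff_ballot: "balanced w \<longleftrightarrow> count_list w U = count_list w Dn \<and> ballot w"
  unfolding balanced_def ballot_iff_take ..

lemma ballot_append:
  assumes "ballot a" "count_list a U = count_list a Dn" "ballot b"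
  shows "ballot (a @ b)"
  using assms unfolding ballot_def prefix_append by auto

lemma ballot_wrap:
  assumes "ballot x" "count_list x U = count_list x Dn"
  shows "ballot (U # x @ [Dn])"
  using assms unfolding ballot_def prefix_Cons prefix_snoc
  by (auto simp: le_Suc_eq)

lemma bal_count_eq: "bal w \<Longrightarrow> count_list w U = count_list w Dn"
  by (induction rule: bal.induct) auto

lemma bal_ballot: "bal w \<Longrightarrow> ballot w"
proof (induction rule: bal.induct)
  case (bal_step x y)
  then have "ballot ((U # x @ [Dn]) @ y)"
    by (intro ballot_append ballot_wrap) (auto simp: bal_count_eq)
  then show ?case by simp
qed (simp add: ballot_def)

lemma ballot_appendD:
  "ballot (p @ y) \<Longrightarrow> count_list p U = count_list p Dn \<Longrightarrow> ballot y"
  unfolding ballot_def by (metis count_list_append add_le_cancel_left same_prefix_prefix)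

lemma ballot_ConsD: "ballot (c # w) \<Longrightarrow> c = U"
  unfolding ballot_def by (cases c) (auto dest: spec[of _ "[Dn]"])

lemma balanced_first_return:
  assumes "balanced w" "w \<noteq> []"
  obtains x y where "w = U # x @ Dn # y" "balanced x" "balanced y"
proof -
  obtain c w' where w: "w = c # w'" using assms(2) by (cases w) auto
  have cnt: "count_list w U = count_list w Dn" and bw: "ballot w"
    using assms(1) balanced_iff_ballot by auto
  have "c = U" using ballot_ConsD bw w by blast
  define P where "P k \<longleftrightarrow> count_list (take k w') Dn = Suc (count_list (take k w') U)" for k
  have "P (length w')" using cnt w \<open>c = U\<close> by (simp add: P_def)
  define k where "k = (LEAST k. P k)"
  have Pk: "P k" and k_le: "k \<le> length w'"
    unfolding k_def using \<open>P (length w')\<close> by (auto intro: LeastI Least_le)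
  have below: "count_list (take i w') Dn \<le> count_list (take i w') U" if "i < k" for i
  proof -
    have "prefix (take (Suc i) w) w" by (rule take_is_prefix)
    then have "count_list (take i w') Dn \<le> Suc (count_list (take i w') U)"
      using bw w \<open>c = U\<close> unfolding ballot_def by fastforce
    moreover have "\<not> P i" using that not_less_Least unfolding k_def by blast
    ultimately show ?thesis unfolding P_def by simp
  qed
  have "k \<noteq> 0" using Pk by (cases k) (auto simp: P_def)
  then obtain x where x: "take k w' = x @ [w' ! (k - 1)]" "x = take (k - 1) w'"
    using k_le take_Suc_conv_app_nth[of "k - 1" w'] by (cases k) auto
  have last: "w' ! (k - 1) = Dn"
  proof (cases "w' ! (k - 1)")
    case U
    then show ?thesis using Pk below[of "k - 1"] \<open>k \<noteq> 0\<close> x by (simp add: P_def)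
  qed
  define y where "y = drop k w'"
  have w_eq: "w = U # x @ Dn # y"
    using w \<open>c = U\<close> x last append_take_drop_id[of k w'] unfolding y_def by simp
  have x_cnt: "count_list x U = count_list x Dn" using Pk x last by (simp add: P_def)
  have "ballot x"
    unfolding ballot_iff_take
  proof (intro allI impI)
    fix i assume "i \<le> length x"
    then have "take i x = take i w'" "i < k" using \<open>k \<noteq> 0\<close> x(2) by auto
    then show "count_list (take i x) Dn \<le> count_list (take i x) U" using below by simp
  qed
  moreover have "ballot y"
    using ballot_appendD[of "U # x @ [Dn]" y] bw w_eq x_cnt by simp
  moreover have "count_list y U = count_list y Dn" using cnt w_eq x_cnt by simp
  ultimately show ?thesis using that w_eq x_cnt balanced_iff_ballot by blast
qed

lemma balanced_imp_bal: "balanced w \<Longrightarrow> bal w"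
proof (induction "length w" arbitrary: w rule: less_induct)
  case less
  show ?case
  proof (cases "w = []")
    case False
    then obtain x y where "w = U # x @ Dn # y" "balanced x" "balanced y"
      using balanced_first_return less.prems by blast
    then show ?thesis using less.hyps by (auto intro: bal_step)
  qed (simp add: bal_Nil)
qed

lemma balanced_iff_bal: "balanced w \<longleftrightarrow> bal w"
  using balanced_imp_bal bal_count_eq bal_ballot balanced_iff_ballot by blast

lemma dyck_iff_bal: "dyck n w \<longleftrightarrow> bal w \<and> count_list w U = n"
  unfolding dyck_def balanced_iff_bal[symmetric] balanced_def
  using length_eq_count_U_Dn[of w] by auto

lemma ballot_not_prefix_Dn:
  "ballot a \<Longrightarrow> count_list p U = count_list p Dn \<Longrightarrow> \<not> prefix (p @ [Dn]) a"
  unfolding ballot_def by fastforce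

lemma length_filter_nth_eq_count:
  "length (filter (\<lambda>j. (x @ z) ! j = c) [0..<length x]) = count_list x c"
proof (induction x arbitrary: z rule: rev_induct)
  case (snoc a x)
  then show ?case by (simp add: nth_append)
qed simp

lemma upos_append_U: "upos (x @ U # y) (count_list x U + 1) = length x"
proof -
  let ?w = "x @ U # y"
  have "[0..<length ?w] = [0..<length x] @ length x # [Suc (length x)..<length ?w]"
    using upt_add_eq_append[of 0 "length x" "Suc (length y)"] upt_conv_Cons[of "length x" "length ?w"]
    by simp
  moreover have "length (filter (\<lambda>j. ?w ! j = U) [0..<length x]) = count_list x U"
    using length_filter_nth_eq_count[of x "U # y" U] by simp
  ultimately show ?thesis unfolding upos_def by (simp add: nth_append)
qed

lemma matchpos_append_bal:
  assumes "bal a"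
  shows "matchpos (x @ U # a @ Dn # z) (length x) = length x + 1 + length a"
  unfolding matchpos_def
proof (rule Least_equality)
  let ?w = "x @ U # a @ Dn # z"
  fix q assume q: "length x < q \<and> q < length ?w \<and> ?w ! q = Dn \<and>
    balanced (take (q - Suc (length x)) (drop (Suc (length x)) ?w))"
  show "length x + 1 + length a \<le> q"
  proof (rule ccontr)
    assume short: "\<not> length x + 1 + length a \<le> q"
    define m where "m = q - Suc (length x)"
    have m: "q = Suc (length x) + m" "m < length a" using q short unfolding m_def by auto
    then have "take (Suc m) a = take m a @ [Dn]" using q by (simp add: nth_append take_Suc_conv_app_nth)
    moreover have "balanced (take m a)" using q m by simp
    ultimately show False
      using ballot_not_prefix_Dn[OF bal_ballot[OF assms]] take_is_prefix[of "Suc m" a]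
      unfolding balanced_def by metis
  qed
qed (use assms in \<open>simp add: nth_append balanced_iff_bal\<close>)

lemma ellD_append_bal:
  assumes "bal a"
  shows "ellD (x @ U # a @ Dn # z) (count_list x U + 1) = length a"
  unfolding ellD_def using upos_append_U[of x "a @ Dn # z"] matchpos_append_bal[OF assms, of x z]
  by simp

lemma bal_append: "bal a \<Longrightarrow> bal b \<Longrightarrow> bal (a @ b)"
  by (induction rule: bal.induct) (auto intro: bal.intros)

text \<open>The lengths of the factors enclosed by the letters U of a balanced word do not depend on the
  context in which the word occurs; \<open>match_lengths w L\<close> records them, in order, as \<open>L\<close>.\<close>
definition match_lengths :: "step list \<Rightarrow> nat list \<Rightarrow> bool" where
  "match_lengths w L \<longleftrightarrow> bal w \<and> length L = count_list w U \<and>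
     (\<forall>x z i. i < length L \<longrightarrow> ellD (x @ w @ z) (count_list x U + i + 1) = L ! i)"

lemma match_lengths_context:
  "match_lengths w L \<Longrightarrow> i < length L \<Longrightarrow> ellD (x @ w @ z) (count_list x U + i + 1) = L ! i"
  unfolding match_lengths_def by blast

lemma match_lengths_Nil: "match_lengths [] []"
  by (simp add: match_lengths_def bal_Nil)

lemma match_lengths_wrap:
  assumes "match_lengths a La"
  shows "match_lengths (U # a @ [Dn]) (length a # La)"
proof -
  have ba: "bal a" and la: "length La = count_list a U"
    using assms by (auto simp: match_lengths_def)
  have "ellD (x @ (U # a @ [Dn]) @ z) (count_list x U + i + 1) = (length a # La) ! i"
    if "i < Suc (length La)" for x z i
  proof (cases i)
    case 0
    then show ?thesis using ellD_append_bal[OF ba, of x z] by simp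
  next
    case (Suc k)
    then show ?thesis
      using match_lengths_context[OF assms, of k "x @ [U]" "Dn # z"] that by simp
  qed
  then show ?thesis using bal_step[OF ba bal_Nil] la unfolding match_lengths_def by simp
qed

lemma match_lengths_append:
  assumes a: "match_lengths a La" and b: "match_lengths b Lb"
  shows "match_lengths (a @ b) (La @ Lb)"
proof -
  have la: "length La = count_list a U" "length Lb = count_list b U"
    using assms by (auto simp: match_lengths_def)
  have "ellD (x @ (a @ b) @ z) (count_list x U + i + 1) = (La @ Lb) ! i"
    if "i < length La + length Lb" for x z i
  proof (cases "i < length La")
    case True
    then show ?thesis using match_lengths_context[OF a True, of x "b @ z"] by (simp add: nth_append)
  next
    case False
    then have "i - length La < length Lb" using that by simp
    from match_lengths_context[OF b this, of "x @ a" z]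
    show ?thesis using False la by (simp add: nth_append add.assoc)
  qed
  moreover have "bal (a @ b)" using a b by (intro bal_append) (auto simp: match_lengths_def)
  ultimately show ?thesis using la unfolding match_lengths_def by simp
qed

lemma match_lengths_concat:
  "(\<And>i. i < m \<Longrightarrow> match_lengths (W i) (L i)) \<Longrightarrow>
    match_lengths (concat (map W [0..<m])) (concat (map L [0..<m]))"
  by (induction m) (simp_all add: match_lengths_Nil match_lengths_append)

lemma match_lengths_exists: "bal w \<Longrightarrow> \<exists>L. match_lengths w L"
proof (induction rule: bal.induct)
  case (bal_step x y)
  then obtain Lx Ly where "match_lengths x Lx" "match_lengths y Ly" by blast
  then have "match_lengths ((U # x @ [Dn]) @ y) ((length x # Lx) @ Ly)"
    using match_lengths_wrap match_lengths_append by blast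
  then show ?case by auto
qed (use match_lengths_Nil in blast)

lemma match_lengths_ellD: "match_lengths w L \<Longrightarrow> i < length L \<Longrightarrow> ellD w (i + 1) = L ! i"
  using match_lengths_context[of w L i "[]" "[]"] by simp

lemma match_lengths_unique: "match_lengths w L1 \<Longrightarrow> match_lengths w L2 \<Longrightarrow> L1 = L2"
  by (metis match_lengths_def match_lengths_ellD nth_equalityI)

lemma match_lengths_length: "match_lengths w L \<Longrightarrow> length w = 2 * length L"
  unfolding match_lengths_def using length_eq_count_U_Dn bal_count_eq by (metis mult_2)

lemma bal_match_lengths_even: "bal w \<Longrightarrow> match_lengths w L \<Longrightarrow> l \<in> set L \<Longrightarrow> even l"
proof (induction arbitrary: L rule: bal.induct)
  case bal_Nil
  then show ?case by (simp add: match_lengths_def)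
next
  case (bal_step x y)
  obtain Lx Ly where x: "match_lengths x Lx" and y: "match_lengths y Ly"
    using bal_step.hyps match_lengths_exists by blast
  have "L = (length x # Lx) @ Ly"
    using match_lengths_unique[OF bal_step.prems(1)] match_lengths_append[OF match_lengths_wrap[OF x] y]
    by simp
  then show ?case using bal_step x y match_lengths_length[OF x] by auto
qed

lemma match_lengths_even: "match_lengths w L \<Longrightarrow> l \<in> set L \<Longrightarrow> even l"
  using bal_match_lengths_even match_lengths_def by blast

definition preimage_count :: "(nat \<Rightarrow> nat) \<Rightarrow> nat \<Rightarrow> nat \<Rightarrow> nat \<Rightarrow> nat" where
  "preimage_count f a b k = length (filter (\<lambda>i. f i = k) [a..<b])"

text \<open>The word \<open>D(S)\<close> has this shape, with \<open>f i\<close> the index of the certificate of the \<open>i\<close>-th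
  non-root node.\<close>
definition nest_word :: "nat \<Rightarrow> nat \<Rightarrow> (nat \<Rightarrow> nat) \<Rightarrow> step list" where
  "nest_word a b f = concat (map (\<lambda>k. U # replicate (preimage_count f a b k) Dn) [a..<b])"

definition nested :: "nat \<Rightarrow> nat \<Rightarrow> (nat \<Rightarrow> nat) \<Rightarrow> bool" where
  "nested a b f \<longleftrightarrow> (\<forall>i. a \<le> i \<and> i < b \<longrightarrow> i \<le> f i \<and> f i < b) \<and>
     (\<forall>i i'. a \<le> i \<and> i < b \<and> i < i' \<and> i' \<le> f i \<longrightarrow> f i' \<le> f i)"

lemma nestedD:
  assumes "nested a b f" "a \<le> i" "i < b"
  shows "i \<le> f i" "f i < b" "i < i' \<Longrightarrow> i' \<le> f i \<Longrightarrow> f i' \<le> f i"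
  using assms unfolding nested_def by blast+

lemma upt_split: "a \<le> m \<Longrightarrow> m \<le> b \<Longrightarrow> [a..<b] = [a..<m] @ [m..<b]"
  by (metis le_add_diff_inverse upt_add_eq_append)

lemma preimage_count_split:
  "a \<le> m \<Longrightarrow> m \<le> b \<Longrightarrow> preimage_count f a b k = preimage_count f a m k + preimage_count f m b k"
  unfolding preimage_count_def using upt_split[of a m b] by simp

lemma preimage_count_eq_0:
  "(\<And>i. m \<le> i \<Longrightarrow> i < b \<Longrightarrow> f i \<noteq> k) \<Longrightarrow> preimage_count f m b k = 0"
  unfolding preimage_count_def by (auto simp: filter_empty_conv)

lemma preimage_count_singleton: "preimage_count f a (Suc a) k = (if f a = k then 1 else 0)"
  unfolding preimage_count_def by simp

lemma preimage_count_cong: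
  "(\<And>i. a \<le> i \<Longrightarrow> i < b \<Longrightarrow> f i = g i) \<Longrightarrow> preimage_count f a b k = preimage_count g a b k"
  unfolding preimage_count_def by (intro arg_cong[where f=length] filter_cong) auto

lemma nest_word_cong:
  "(\<And>i. a \<le> i \<Longrightarrow> i < b \<Longrightarrow> f i = g i) \<Longrightarrow> nest_word a b f = nest_word a b g"
  unfolding nest_word_def using preimage_count_cong by metis

lemma concat_map_cong_upt:
  "(\<And>k. a \<le> k \<Longrightarrow> k < b \<Longrightarrow> F k = G k) \<Longrightarrow> concat (map F [a..<b]) = concat (map G [a..<b])"
  by (intro arg_cong[where f=concat] map_cong) auto

lemma concat_map_replicate_snoc:
  assumes "m \<le> j"
  shows "concat (map (\<lambda>k. U # replicate (c k + (if k = j then 1 else 0)) Dn) [m..<Suc j]) =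
    concat (map (\<lambda>k. U # replicate (c k) Dn) [m..<Suc j]) @ [Dn]"
proof -
  have "concat (map (\<lambda>k. U # replicate (c k + (if k = j then 1 else 0)) Dn) [m..<j]) =
      concat (map (\<lambda>k. U # replicate (c k) Dn) [m..<j])"
    by (rule concat_map_cong_upt) simp
  then show ?thesis using assms by (simp add: replicate_append_same[symmetric])
qed

text \<open>The letter U of index \<open>a\<close> is matched by the letter Dn closing the block of \<open>f a\<close>.\<close>
lemma nest_word_decompose:
  assumes N: "nested a b f" and ab: "a < b"
  shows "nest_word a b f = U # nest_word (Suc a) (Suc (f a)) f @ Dn # nest_word (Suc (f a)) b f"
proof -
  define j where "j = f a"
  define inner where "inner = preimage_count f (Suc a) (Suc j)"
  define outer where "outer = preimage_count f (Suc j) b"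
  have aj: "a \<le> j" "j < b" using nestedD[OF N _ ab] unfolding j_def by auto
  have count: "preimage_count f a b k = (if k = j then 1 else 0) + inner k + outer k" for k
    using preimage_count_split[of a "Suc a" b] preimage_count_split[of "Suc a" "Suc j" b] aj
    unfolding inner_def outer_def j_def by (simp add: preimage_count_singleton)
  have inner_0: "inner k = 0" if "k \<le> a \<or> j < k" for k
    unfolding inner_def
  proof (rule preimage_count_eq_0)
    fix i assume "Suc a \<le> i" "i < Suc j"
    then show "f i \<noteq> k" using nestedD[OF N, of i] nestedD(3)[OF N _ ab, of i] that aj
      unfolding j_def by fastforce
  qed
  have outer_0: "outer k = 0" if "k \<le> j" for k
    unfolding outer_def
  proof (rule preimage_count_eq_0)
    fix i assume "Suc j \<le> i" "i < b"
    then show "f i \<noteq> k" using nestedD(1)[OF N, of i] that aj by simp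
  qed
  have "concat (map (\<lambda>k. U # replicate (preimage_count f a b k) Dn) [a..<Suc j]) =
      concat (map (\<lambda>k. U # replicate (inner k + (if k = j then 1 else 0)) Dn) [a..<Suc j])"
    by (rule concat_map_cong_upt) (simp add: count outer_0)
  also have "\<dots> = U # nest_word (Suc a) (Suc j) f @ [Dn]"
    using concat_map_replicate_snoc[OF aj(1), of inner] inner_0[of a] upt_conv_Cons[of a "Suc j"] aj(1)
    unfolding nest_word_def inner_def by (simp del: upt_Suc)
  finally have first: "concat (map (\<lambda>k. U # replicate (preimage_count f a b k) Dn) [a..<Suc j]) =
      U # nest_word (Suc a) (Suc j) f @ [Dn]" .
  have second: "concat (map (\<lambda>k. U # replicate (preimage_count f a b k) Dn) [Suc j..<b]) =
      nest_word (Suc j) b f"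
    unfolding nest_word_def by (rule concat_map_cong_upt) (simp add: count inner_0 outer_def)
  show ?thesis
    using upt_split[of a "Suc j" b] aj first second unfolding nest_word_def j_def by simp
qed

lemma nested_inner:
  assumes N: "nested a b f" and ab: "a < b"
  shows "nested (Suc a) (Suc (f a)) f"
proof -
  have "i \<le> f i \<and> f i < Suc (f a)" if "Suc a \<le> i" "i < Suc (f a)" for i
    using nestedD(1,2)[OF N, of i] nestedD(2)[OF N _ ab] nestedD(3)[OF N _ ab, of i] that by simp
  moreover have "f i' \<le> f i" if "Suc a \<le> i" "i < Suc (f a)" "i < i'" "i' \<le> f i" for i i'
    using nestedD(3)[OF N, of i i'] nestedD[OF N _ ab] that by simp
  ultimately show ?thesis unfolding nested_def by blast
qed

lemma nested_outer:
  assumes N: "nested a b f" and ab: "a < b"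
  shows "nested (Suc (f a)) b f"
proof -
  have "a \<le> f a" using nestedD(1)[OF N _ ab] by simp
  then show ?thesis unfolding nested_def using nestedD[OF N] by (meson Suc_leD le_trans)
qed

lemma nested_join:
  assumes "nested (Suc a) (Suc j) f" "nested (Suc j) b f" "f a = j" "a \<le> j" "j < b"
  shows "nested a b f"
  unfolding nested_def
proof (rule conjI; intro allI impI)
  fix i assume i: "a \<le> i \<and> i < b"
  show "i \<le> f i \<and> f i < b"
  proof (cases "i = a")
    case False
    then show ?thesis
      using nestedD(1,2)[OF assms(1), of i] nestedD(1,2)[OF assms(2), of i] assms(5) i
      by (cases "i \<le> j") auto
  qed (use assms(3-5) in simp)
next
  fix i i' assume i: "a \<le> i \<and> i < b \<and> i < i' \<and> i' \<le> f i"
  show "f i' \<le> f i"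
  proof (cases "i = a")
    case True
    then show ?thesis using nestedD(2)[OF assms(1), of i'] i assms(3) by simp
  next
    case False
    then show ?thesis using nestedD(3)[OF assms(1), of i i'] nestedD(3)[OF assms(2), of i i'] i
      by (cases "i \<le> j") auto
  qed
qed

lemma match_lengths_nest_word:
  "nested a b f \<Longrightarrow> match_lengths (nest_word a b f) (map (\<lambda>i. 2 * (f i - i)) [a..<b])"
proof (induction "b - a" arbitrary: a b rule: less_induct)
  case less
  show ?case
  proof (cases "a < b")
    case False
    then show ?thesis by (simp add: nest_word_def match_lengths_Nil)
  next
    case True
    define j where "j = f a"
    have aj: "a \<le> j" "j < b" using nestedD[OF less.prems _ True] unfolding j_def by auto
    have inner: "match_lengths (nest_word (Suc a) (Suc j) f) (map (\<lambda>i. 2 * (f i - i)) [Suc a..<Suc j])"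
      using less.hyps[of "Suc j" "Suc a"] nested_inner[OF less.prems True] aj True
      unfolding j_def by (simp del: upt_Suc)
    have outer: "match_lengths (nest_word (Suc j) b f) (map (\<lambda>i. 2 * (f i - i)) [Suc j..<b])"
      using less.hyps[of b "Suc j"] nested_outer[OF less.prems True] aj True
      unfolding j_def by (simp del: upt_Suc)
    have "length (nest_word (Suc a) (Suc j) f) = 2 * (j - a)"
      using match_lengths_length[OF inner] by (simp del: upt_Suc)
    then have "match_lengths ((U # nest_word (Suc a) (Suc j) f @ [Dn]) @ nest_word (Suc j) b f)
        ((2 * (f a - a) # map (\<lambda>i. 2 * (f i - i)) [Suc a..<Suc j]) @ map (\<lambda>i. 2 * (f i - i)) [Suc j..<b])"
      using match_lengths_append[OF match_lengths_wrap[OF inner] outer] unfolding j_def by simp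
    moreover have "[a..<b] = a # [Suc a..<Suc j] @ [Suc j..<b]"
      using aj upt_split[of "Suc a" "Suc j" b] upt_conv_Cons[of a b] by (simp del: upt_Suc)
    ultimately show ?thesis using nest_word_decompose[OF less.prems True] unfolding j_def by simp
  qed
qed

lemma bal_eq_nest_word:
  assumes "bal D" "match_lengths D (map (\<lambda>i. 2 * (f i - i)) [a..<b])" "\<And>i. i \<le> f i"
  shows "nested a b f \<and> D = nest_word a b f"
  using assms
proof (induction arbitrary: a b rule: bal.induct)
  case bal_Nil
  then have "map (\<lambda>i. 2 * (f i - i)) [a..<b] = []"
    using match_lengths_unique match_lengths_Nil by blast
  then have "b \<le> a" by auto
  then show ?case by (auto simp add: nested_def nest_word_def)
next
  case (bal_step x y)
  obtain Lx Ly where x: "match_lengths x Lx" and y: "match_lengths y Ly"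
    using bal_step.hyps match_lengths_exists by blast
  have L: "map (\<lambda>i. 2 * (f i - i)) [a..<b] = (length x # Lx) @ Ly"
    using match_lengths_unique[OF bal_step.prems(1)] match_lengths_append[OF match_lengths_wrap[OF x] y]
    by simp
  define j where "j = f a"
  have ab: "a < b" using L by (cases "a < b") auto
  then have rest: "map (\<lambda>i. 2 * (f i - i)) [Suc a..<b] = Lx @ Ly" and xj: "length x = 2 * (j - a)"
    using L upt_conv_Cons[of a b] unfolding j_def by auto
  have aj: "a \<le> j" using bal_step.prems(2) unfolding j_def by simp
  have lx: "length Lx = j - a" using match_lengths_length[OF x] xj by simp
  then have jb: "j < b" using arg_cong[OF rest, of length] aj ab by simp
  have "map (\<lambda>i. 2 * (f i - i)) [Suc a..<Suc j] @ map (\<lambda>i. 2 * (f i - i)) [Suc j..<b] = Lx @ Ly"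
    using rest upt_split[of "Suc a" "Suc j" b] aj jb by (simp del: upt_Suc)
  then have "map (\<lambda>i. 2 * (f i - i)) [Suc a..<Suc j] = Lx" "map (\<lambda>i. 2 * (f i - i)) [Suc j..<b] = Ly"
    using append_eq_append_conv[of _ Lx] lx by (auto simp del: upt_Suc)
  then have "nested (Suc a) (Suc j) f \<and> x = nest_word (Suc a) (Suc j) f"
    "nested (Suc j) b f \<and> y = nest_word (Suc j) b f"
    using bal_step.IH(1)[of "Suc a" "Suc j"] bal_step.IH(2)[of "Suc j" b] x y bal_step.prems(2)
    by simp_all
  moreover have N: "nested a b f" using calculation nested_join aj jb unfolding j_def by blast
  ultimately show ?case using nest_word_decompose[OF N ab] unfolding j_def by simp
qed

section \<open>Contour words of plane trees\<close>

abbreviation nnodes :: "ltree \<Rightarrow> nat" where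
  "nnodes t \<equiv> length (addrs t)"

abbreviation forest_word :: "ltree list \<Rightarrow> step list" where
  "forest_word ts \<equiv> concat (map (\<lambda>t. U # Ew t @ [Dn]) ts)"

lemma map_upt_nth: "map (\<lambda>i. f (xs ! i)) [0..<length xs] = map f xs"
  by (rule nth_equalityI) auto

lemma Ew_LNode: "Ew (LNode l ts) = forest_word ts"
  using map_upt_nth[of "\<lambda>t. U # Ew t @ [Dn]" ts] by simp

lemma addrs_root_first: "addrs t = [] # tl (addrs t)"
  by (cases t) simp

lemma addrs_not_Nil [simp]: "addrs t \<noteq> []"
  by (cases t) simp

text \<open>The letter U entering a node \<open>u\<close> encloses the traversal of \<open>S\<^sub>u\<close>.\<close>
lemma match_lengths_Ew:
  "match_lengths (Ew t) (map (\<lambda>u. 2 * (nnodes (subtree_at t u) - 1)) (tl (addrs t)))"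
proof (induction t)
  case (LNode l ts)
  let ?L = "\<lambda>t. map (\<lambda>u. 2 * (nnodes (subtree_at t u) - 1)) (tl (addrs t))"
  have IH: "match_lengths (Ew (ts ! i)) (?L (ts ! i))" if "i < length ts" for i
    using LNode that by simp
  have "?L (LNode l ts) = concat (map (\<lambda>i. map (\<lambda>p. 2 * (nnodes (subtree_at (ts ! i) p) - 1))
      (addrs (ts ! i))) [0..<length ts])"
    by (simp add: map_concat comp_def)
  also have "\<dots> = concat (map (\<lambda>i. 2 * (nnodes (ts ! i) - 1) # ?L (ts ! i)) [0..<length ts])"
    by (rule concat_map_cong_upt) (subst addrs_root_first, simp)
  finally have L: "?L (LNode l ts) = \<dots>" .
  have len: "length (Ew (ts ! i)) = 2 * (nnodes (ts ! i) - 1)" if "i < length ts" for i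
    using match_lengths_length[OF IH[OF that]] by simp
  show ?case
    unfolding L Ew.simps by (rule match_lengths_concat) (metis IH match_lengths_wrap len)
qed

lemma bal_Ew: "bal (Ew t)"
  using match_lengths_Ew unfolding match_lengths_def by blast

lemma count_U_Ew: "count_list (Ew t) U = nnodes t - 1"
  using match_lengths_Ew[of t] unfolding match_lengths_def by simp

lemma bal_imp_forest_word: "bal w \<Longrightarrow> \<exists>ts. forest_word ts = w"
proof (induction rule: bal.induct)
  case (bal_step x y)
  then obtain tx ty where "forest_word tx = x" "forest_word ty = y" by blast
  then show ?case by (intro exI[of _ "LNode 0 tx # ty"]) (simp add: Ew_LNode del: Ew.simps)
qed (rule exI[of _ "[]"], simp)

lemma bal_imp_Ew: "bal w \<Longrightarrow> \<exists>t. Ew t = w"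
  using bal_imp_forest_word Ew_LNode by metis

lemma bal_Dn_split_unique:
  assumes "bal a" "bal a'" "a @ Dn # b = a' @ Dn # b'"
  shows "a = a' \<and> b = b'"
proof -
  have no_shorter: "\<not> length a < length a'"
    if "bal a" "bal a'" "a @ Dn # b = a' @ Dn # b'" for a a' b b'
  proof
    assume "length a < length a'"
    have "a @ [Dn] = take (Suc (length a)) (a' @ Dn # b')"
      using that(3)[symmetric] by simp
    also have "\<dots> = take (Suc (length a)) a'"
      using \<open>length a < length a'\<close> by simp
    finally have "prefix (a @ [Dn]) a'" by (metis take_is_prefix)
    then show False using ballot_not_prefix_Dn[OF bal_ballot bal_count_eq] that by blast
  qed
  have "length a = length a'"
    using no_shorter[OF assms] no_shorter[OF assms(2,1) assms(3)[symmetric]] by simp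
  then show ?thesis using assms(3) by simp
qed

fun relabel :: "ltree \<Rightarrow> (nat list \<Rightarrow> nat) \<Rightarrow> ltree" where
  "relabel (LNode l ts) g =
     LNode (g []) (map (\<lambda>i. relabel (ts ! i) (\<lambda>p. g (i # p))) [0..<length ts])"

lemma addrs_relabel [simp]: "addrs (relabel t g) = addrs t"
  by (induction t arbitrary: g) (auto intro!: arg_cong[where f=concat])

lemma Ew_relabel [simp]: "Ew (relabel t g) = Ew t"
  by (induction t arbitrary: g) (auto intro!: arg_cong[where f=concat])

lemma lab_at_relabel: "u \<in> set (addrs t) \<Longrightarrow> lab_at (relabel t g) u = g u"
proof (induction u arbitrary: t g)
  case Nil
  then show ?case by (cases t) (simp add: lab_at_def)
next
  case (Cons i p)
  obtain l ts where t: "t = LNode l ts" by (cases t)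
  with Cons.prems have "i < length ts" "p \<in> set (addrs (ts ! i))" by auto
  with Cons.IH t show ?case by (simp add: lab_at_def)
qed

lemma relabel_lab_at: "relabel t (lab_at t) = t"
proof (induction t)
  case (LNode l ts)
  have "(\<lambda>p. lab_at (LNode l ts) (i # p)) = lab_at (ts ! i)" for i
    by (auto simp: lab_at_def)
  then have "map (\<lambda>i. relabel (ts ! i) (\<lambda>p. lab_at (LNode l ts) (i # p))) [0..<length ts] = ts"
    using LNode by (intro nth_equalityI) simp_all
  then show ?case by (simp add: lab_at_def)
qed

lemma relabel_cong: "(\<And>u. u \<in> set (addrs t) \<Longrightarrow> g1 u = g2 u) \<Longrightarrow> relabel t g1 = relabel t g2"
proof (induction t arbitrary: g1 g2)
  case (LNode l ts)
  have "relabel (ts ! i) (\<lambda>p. g1 (i # p)) = relabel (ts ! i) (\<lambda>p. g2 (i # p))"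
    if "i < length ts" for i
    using that by (intro LNode.IH[OF nth_mem[OF that]] LNode.prems) auto
  moreover have "g1 [] = g2 []" using LNode.prems by simp
  ultimately show ?case by (simp del: upt_Suc)
qed

lemma relabel_relabel: "relabel (relabel t g1) g2 = relabel t g2"
  by (induction t arbitrary: g1 g2) simp

definition shape :: "ltree \<Rightarrow> ltree" where
  "shape t = relabel t (\<lambda>_. 0)"

lemma shape_LNode: "shape (LNode l ts) = LNode 0 (map shape ts)"
  unfolding shape_def using map_upt_nth[of "\<lambda>t. relabel t (\<lambda>_. 0)" ts] by simp

lemma forest_word_eq_imp_shapes_eq:
  assumes "\<And>t t'. t \<in> set ts \<Longrightarrow> Ew t = Ew t' \<Longrightarrow> shape t = shape t'"
    and "forest_word ts = forest_word ts'"
  shows "map shape ts = map shape ts'"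
  using assms
proof (induction ts arbitrary: ts')
  case Nil
  then show ?case by (cases ts') auto
next
  case (Cons t r)
  then obtain t' r' where ts': "ts' = t' # r'" by (cases ts') auto
  have "Ew t @ Dn # forest_word r = Ew t' @ Dn # forest_word r'"
    using Cons.prems(2) ts' by simp
  then have "Ew t = Ew t'" "forest_word r = forest_word r'"
    using bal_Dn_split_unique[OF bal_Ew bal_Ew] by blast+
  then show ?case using Cons ts' by simp
qed

lemma Ew_eq_imp_shape_eq: "Ew s1 = Ew s2 \<Longrightarrow> shape s1 = shape s2"
proof (induction s1 arbitrary: s2)
  case (LNode l1 ts1)
  obtain l2 ts2 where s2: "s2 = LNode l2 ts2" by (cases s2)
  have "forest_word ts1 = forest_word ts2"
    using LNode.prems s2 Ew_LNode by metis
  then have "map shape ts1 = map shape ts2"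
    using forest_word_eq_imp_shapes_eq LNode.IH by blast
  then show ?case using s2 by (simp add: shape_LNode)
qed

lemma Ew_eq_imp_addrs_eq: "Ew s1 = Ew s2 \<Longrightarrow> addrs s1 = addrs s2"
  using Ew_eq_imp_shape_eq unfolding shape_def by (metis addrs_relabel)

lemma Ew_eq_imp_eq:
  assumes "Ew s1 = Ew s2" "\<And>u. u \<in> set (addrs s1) \<Longrightarrow> lab_at s1 u = lab_at s2 u"
  shows "s1 = s2"
proof -
  have shape: "shape s1 = shape s2" using Ew_eq_imp_shape_eq[OF assms(1)] .
  have "s1 = relabel s1 (lab_at s2)"
    using relabel_cong[of s1 "lab_at s1" "lab_at s2"] assms(2) relabel_lab_at by simp
  also have "\<dots> = relabel (shape s2) (lab_at s2)"
    using shape unfolding shape_def by (metis relabel_relabel)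
  also have "\<dots> = s2"
    unfolding shape_def by (simp add: relabel_relabel relabel_lab_at)
  finally show ?thesis .
qed

lemma distinct_concat_map_Cons:
  "(\<And>i. i < m \<Longrightarrow> distinct (X i)) \<Longrightarrow> distinct (concat (map (\<lambda>i. map (Cons i) (X i)) [0..<m]))"
proof (induction m)
  case (Suc m)
  have "set (concat (map (\<lambda>i. map (Cons i) (X i)) [0..<m])) \<inter> set (map (Cons m) (X m)) = {}"
    by auto
  with Suc show ?case by (simp add: distinct_map)
qed simp

lemma distinct_addrs: "distinct (addrs t)"
  by (induction t) (auto intro: distinct_concat_map_Cons)

lemma addrs_Cons_mem: "i < length ts \<Longrightarrow> p \<in> set (addrs (ts ! i)) \<Longrightarrow> i # p \<in> set (addrs (LNode l ts))"
  by auto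

lemma addrs_prefix_closed: "u \<in> set (addrs t) \<Longrightarrow> prefix v u \<Longrightarrow> v \<in> set (addrs t)"
proof (induction u arbitrary: t v)
  case Nil
  then show ?case by (cases t) simp
next
  case (Cons i p)
  obtain l ts where t: "t = LNode l ts" by (cases t)
  with Cons.prems have i: "i < length ts" and p: "p \<in> set (addrs (ts ! i))" by auto
  show ?case
  proof (cases v)
    case (Cons j v')
    with Cons.prems(2) have "j = i" "prefix v' p" by auto
    then show ?thesis using Cons.IH[OF p] t i \<open>v = j # v'\<close> addrs_Cons_mem by blast
  qed (simp add: t)
qed

lemma addrs_subtree_block:
  "u \<in> set (addrs t) \<Longrightarrow> \<exists>P Q. addrs t = P @ map ((@) u) (addrs (subtree_at t u)) @ Q \<and>
     (\<forall>v \<in> set P \<union> set Q. \<not> prefix u v)"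
proof (induction u arbitrary: t)
  case Nil
  show ?case by (rule exI[of _ "[]"], rule exI[of _ "[]"]) simp
next
  case (Cons i p)
  obtain l ts where t: "t = LNode l ts" by (cases t)
  with Cons.prems have i: "i < length ts" and p: "p \<in> set (addrs (ts ! i))" by auto
  obtain P' Q' where PQ': "addrs (ts ! i) = P' @ map ((@) p) (addrs (subtree_at (ts ! i) p)) @ Q'"
    "\<forall>v \<in> set P' \<union> set Q'. \<not> prefix p v"
    using Cons.IH[OF p] by blast
  define F where "F k = map (Cons k) (addrs (ts ! k))" for k
  have "[0..<length ts] = [0..<i] @ i # [Suc i..<length ts]"
    using i upt_split[of 0 i "length ts"] upt_conv_Cons[of i "length ts"] by (simp del: upt_Suc)
  then have "addrs t = ([] # concat (map F [0..<i]) @ map (Cons i) P') @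
      map ((@) (i # p)) (addrs (subtree_at t (i # p))) @
      (map (Cons i) Q' @ concat (map F [Suc i..<length ts]))"
    using t PQ'(1) unfolding F_def by simp
  moreover have "\<forall>v \<in> set ([] # concat (map F [0..<i]) @ map (Cons i) P') \<union>
      set (map (Cons i) Q' @ concat (map F [Suc i..<length ts])). \<not> prefix (i # p) v"
    unfolding F_def using PQ'(2) by auto
  ultimately show ?case by blast
qed

definition pos :: "ltree \<Rightarrow> nat list \<Rightarrow> nat" where
  "pos t v = length (takeWhile (\<lambda>x. x \<noteq> v) (addrs t))"

lemma length_takeWhile_neq_less: "v \<in> set xs \<Longrightarrow> length (takeWhile (\<lambda>x. x \<noteq> v) xs) < length xs"
  by (induction xs) auto

lemma pos_lt: "v \<in> set (addrs t) \<Longrightarrow> pos t v < nnodes t"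
  unfolding pos_def by (rule length_takeWhile_neq_less)

lemma nth_pos: "v \<in> set (addrs t) \<Longrightarrow> addrs t ! pos t v = v"
  using nth_length_takeWhile[of "\<lambda>x. x \<noteq> v" "addrs t"] pos_lt[of v t] unfolding pos_def by simp

lemma pos_nth: "k < nnodes t \<Longrightarrow> pos t (addrs t ! k) = k"
  by (metis distinct_addrs nth_eq_iff_index_eq nth_mem nth_pos pos_lt)

lemma pos_inj: "v \<in> set (addrs t) \<Longrightarrow> w \<in> set (addrs t) \<Longrightarrow> pos t v = pos t w \<Longrightarrow> v = w"
  using nth_pos by metis

lemma pos_root: "pos t [] = 0"
  unfolding pos_def by (subst addrs_root_first) simp

lemma mem_takeWhile_pos:
  assumes "v \<in> set (addrs t)"
  shows "w \<in> set (takeWhile (\<lambda>x. x \<noteq> v) (addrs t)) \<longleftrightarrow> w \<in> set (addrs t) \<and> pos t w < pos t v"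
proof -
  have "takeWhile (\<lambda>x. x \<noteq> v) (addrs t) = take (pos t v) (addrs t)"
    unfolding pos_def by (rule takeWhile_eq_take)
  then show ?thesis
    using pos_lt[OF assms] pos_nth nth_pos
    by (auto simp: in_set_conv_nth) (metis order.strict_trans pos_lt)+
qed

lemma nth_append_block_iff:
  assumes "k < length (P @ B @ Q)" "\<forall>v \<in> set P \<union> set Q. \<not> R v" "\<forall>v \<in> set B. R v"
  shows "R ((P @ B @ Q) ! k) \<longleftrightarrow> length P \<le> k \<and> k < length P + length B"
  using assms by (auto simp: nth_append)

lemma prefix_iff_pos_range:
  assumes u: "u \<in> set (addrs t)" and v: "v \<in> set (addrs t)"
  shows "prefix u v \<longleftrightarrow> pos t u \<le> pos t v \<and> pos t v < pos t u + nnodes (subtree_at t u)"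
proof -
  obtain P Q where PQ: "addrs t = P @ map ((@) u) (addrs (subtree_at t u)) @ Q"
    "\<forall>v \<in> set P \<union> set Q. \<not> prefix u v"
    using addrs_subtree_block[OF u] by blast
  have "addrs t ! length P = u"
    using PQ(1) by (subst (asm) addrs_root_first) (simp add: nth_append)
  then have "pos t u = length P"
    using pos_nth[of "length P" t] PQ(1) by (simp add: addrs_not_Nil)
  moreover have "prefix u (addrs t ! pos t v) \<longleftrightarrow>
      length P \<le> pos t v \<and> pos t v < length P + nnodes (subtree_at t u)"
    using nth_append_block_iff[of "pos t v" P _ Q "prefix u"] pos_lt[OF v] PQ by auto
  ultimately show ?thesis using nth_pos[OF v] by simp
qed

lemma prefix_pos_le: "u \<in> set (addrs t) \<Longrightarrow> v \<in> set (addrs t) \<Longrightarrow> prefix u v \<Longrightarrow> pos t u \<le> pos t v"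
  using prefix_iff_pos_range by blast

lemma prefix_pos_less:
  "u \<in> set (addrs t) \<Longrightarrow> v \<in> set (addrs t) \<Longrightarrow> prefix u v \<Longrightarrow> u \<noteq> v \<Longrightarrow> pos t u < pos t v"
  using prefix_pos_le pos_inj by (metis le_neq_implies_less)

lemma nnodes_eq_Suc_edges: "nnodes t = Suc (edges t)"
  unfolding edges_def using addrs_not_Nil[of t] by (cases "addrs t") auto

lemma pos_addrs: "addrs s1 = addrs s2 \<Longrightarrow> pos s1 = pos s2"
  unfolding pos_def[abs_def] by simp

lemma nonroot_nth:
  assumes "i < edges t"
  shows "addrs t ! Suc i \<in> set (addrs t)" "addrs t ! Suc i \<noteq> []" "pos t (addrs t ! Suc i) = Suc i"
proof -
  have "Suc i < nnodes t" using assms nnodes_eq_Suc_edges by simp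
  then show "addrs t ! Suc i \<in> set (addrs t)" "pos t (addrs t ! Suc i) = Suc i"
    using pos_nth by auto
  then show "addrs t ! Suc i \<noteq> []" using pos_root by force
qed

lemma nonroot_obtain:
  assumes "u \<in> set (addrs t)" "u \<noteq> []"
  obtains k where "k < edges t" "u = addrs t ! Suc k"
proof -
  have "pos t u \<noteq> 0" using assms pos_root pos_inj[OF assms(1), of "[]"] addrs_root_first
    by (metis list.set_intros(1))
  then obtain k where k: "pos t u = Suc k" by (cases "pos t u") auto
  then show ?thesis
    using that pos_lt[OF assms(1)] nth_pos[OF assms(1)] nnodes_eq_Suc_edges by simp
qed

lemma tl_addrs: "tl (addrs t) = map (\<lambda>j. addrs t ! Suc j) [0..<edges t]"
  by (rule nth_equalityI) (auto simp: edges_def nth_tl)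

lemma ellD_Ew:
  "k < edges t \<Longrightarrow> ellD (Ew t) (k + 1) = 2 * (nnodes (subtree_at t (addrs t ! Suc k)) - 1)"
  using match_lengths_ellD[OF match_lengths_Ew, of k t] by (simp add: tl_addrs)

lemma hd_filter_first:
  assumes "x \<in> set xs" "P x"
  shows "hd (filter P xs) \<in> set xs \<and> P (hd (filter P xs)) \<and>
    length (takeWhile (\<lambda>y. y \<noteq> hd (filter P xs)) xs) \<le> length (takeWhile (\<lambda>y. y \<noteq> x) xs)"
  using assms by (induction xs) auto

lemma hd_filter_pos:
  assumes "x \<in> set (addrs t)" "P x"
  shows "hd (filter P (addrs t)) \<in> set (addrs t) \<and> P (hd (filter P (addrs t))) \<and>
    pos t (hd (filter P (addrs t))) \<le> pos t x"
  using hd_filter_first[of x "addrs t" P, OF assms] unfolding pos_def by blast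

lemma prefix_take_length: "prefix u w \<Longrightarrow> take (length u) w = u"
  by (auto simp: prefix_def)

lemma prefix_take_mono: "prefix u v \<Longrightarrow> length u \<le> d \<Longrightarrow> prefix u (take d v)"
  by (auto simp: prefix_def)

text \<open>Labels are recovered from certificates: the label of \<open>w\<close> is the largest depth \<open>d\<close> at which
  the ancestor of \<open>w\<close> has its certificate \<open>F\<close> strictly after \<open>w\<close>, and 0 if there is none.\<close>
definition cert_label :: "ltree \<Rightarrow> (nat list \<Rightarrow> nat list) \<Rightarrow> nat list \<Rightarrow> nat" where
  "cert_label t F w = Max (insert 0 {d. 1 \<le> d \<and> d \<le> length w \<and> pos t w < pos t (F (take d w))})"

lemma cert_label_finite: "finite {d. 1 \<le> d \<and> d \<le> length w \<and> pos t w < pos t (F (take d w))}"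
  by (rule finite_subset[of _ "{..length w}"]) auto

lemma cert_label_ge:
  "1 \<le> d \<Longrightarrow> d \<le> length w \<Longrightarrow> pos t w < pos t (F (take d w)) \<Longrightarrow> d \<le> cert_label t F w"
  unfolding cert_label_def by (rule Max_ge) (auto simp: cert_label_finite)

lemma cert_label_le: "cert_label t F w \<le> length w"
  unfolding cert_label_def by (rule Max.boundedI) (auto simp: cert_label_finite)

lemma cert_label_le_iff:
  "cert_label t F w \<le> m \<longleftrightarrow> (\<forall>d. 1 \<le> d \<and> d \<le> length w \<and> pos t w < pos t (F (take d w)) \<longrightarrow> d \<le> m)"
  unfolding cert_label_def by (subst Max_le_iff) (auto simp: cert_label_finite)

lemma cert_label_nonzero:
  assumes "cert_label t F w \<noteq> 0"
  shows "pos t w < pos t (F (take (cert_label t F w) w))"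
proof -
  have "cert_label t F w \<in> insert 0 {d. 1 \<le> d \<and> d \<le> length w \<and> pos t w < pos t (F (take d w))}"
    unfolding cert_label_def by (rule Max_in) (auto simp: cert_label_finite)
  then show ?thesis using assms by auto
qed

lemma cert_label_cong:
  assumes "pos t1 = pos t2" "\<And>d. 1 \<le> d \<Longrightarrow> d \<le> length w \<Longrightarrow> F1 (take d w) = F2 (take d w)"
  shows "cert_label t1 F1 w = cert_label t2 F2 w"
  unfolding cert_label_def using assms by (intro arg_cong[where f="\<lambda>X. Max (insert 0 X)"]) auto

locale sticky_tree =
  fixes S :: ltree
  assumes sticky: "sticky S"
begin

abbreviation "A \<equiv> set (addrs S)"

lemma lab_le_depth: "u \<in> A \<Longrightarrow> lab_at S u \<le> length u"
  using sticky unfolding sticky_def by blast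

lemma lower_label_below: "u \<in> A \<Longrightarrow> u \<noteq> [] \<Longrightarrow> \<exists>v\<in>A. prefix u v \<and> lab_at S v < length u"
  using sticky unfolding sticky_def by blast

lemma label_ge_before:
  "u \<in> A \<Longrightarrow> v \<in> A \<Longrightarrow> prefix u v \<Longrightarrow> lab_at S v = length u \<Longrightarrow> w \<in> A \<Longrightarrow>
    pos S w < pos S v \<Longrightarrow> prefix u w \<Longrightarrow> length u \<le> lab_at S w"
  using sticky mem_takeWhile_pos unfolding sticky_def by blast

lemma cert_props:
  assumes "u \<in> A" "u \<noteq> []"
  shows "cert S u \<in> A" "prefix u (cert S u)" "lab_at S (cert S u) < length u"
    "\<And>w. w \<in> A \<Longrightarrow> prefix u w \<Longrightarrow> lab_at S w < length u \<Longrightarrow> pos S (cert S u) \<le> pos S w"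
proof -
  obtain v where "v \<in> A" "prefix u v" "lab_at S v < length u"
    using lower_label_below[OF assms] by blast
  then show "cert S u \<in> A" "prefix u (cert S u)" "lab_at S (cert S u) < length u"
    using hd_filter_pos[of v S "\<lambda>v. prefix u v \<and> lab_at S v < length u"] unfolding cert_def by auto
  fix w assume "w \<in> A" "prefix u w" "lab_at S w < length u"
  then show "pos S (cert S u) \<le> pos S w"
    using hd_filter_pos[of w S "\<lambda>v. prefix u v \<and> lab_at S v < length u"] unfolding cert_def by auto
qed

lemma cert_pos_in_subtree:
  assumes "u \<in> A" "u \<noteq> []"
  shows "pos S u \<le> pos S (cert S u)" "pos S (cert S u) < pos S u + nnodes (subtree_at S u)"
  using prefix_iff_pos_range[OF assms(1) cert_props(1)[OF assms]] cert_props(2)[OF assms] by auto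

lemma cert_nested:
  assumes u: "u \<in> A" "u \<noteq> []" and u': "u' \<in> A" "u' \<noteq> []"
    and between: "pos S u < pos S u'" "pos S u' \<le> pos S (cert S u)"
  shows "pos S (cert S u') \<le> pos S (cert S u)"
proof -
  define c where "c = cert S u"
  have c: "c \<in> A" "lab_at S c < length u" using cert_props[OF u] unfolding c_def by auto
  have "prefix u u'"
    using prefix_iff_pos_range[OF u(1) u'(1)] cert_pos_in_subtree[OF u] between unfolding c_def by simp
  moreover have "u \<noteq> u'" using between by auto
  ultimately have "length u < length u'" by (simp add: prefix_length_less prefix_order.le_less)
  show ?thesis
  proof (cases "prefix u' c")
    case True
    then show ?thesis using cert_props(4)[OF u' c(1)] c(2) \<open>length u < length u'\<close>
      unfolding c_def by simp
  next
    case False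
    then have "pos S u' + nnodes (subtree_at S u') \<le> pos S c"
      using prefix_iff_pos_range[OF u'(1) c(1)] between unfolding c_def by simp
    then show ?thesis using cert_pos_in_subtree(2)[OF u'] unfolding c_def by simp
  qed
qed

lemma cert_label_le_lab:
  assumes w: "w \<in> A"
  shows "cert_label S (cert S) w \<le> lab_at S w"
  unfolding cert_label_le_iff
proof (intro allI impI)
  fix d assume d: "1 \<le> d \<and> d \<le> length w \<and> pos S w < pos S (cert S (take d w))"
  define u where "u = take d w"
  have u: "u \<in> A" "u \<noteq> []" "length u = d" "prefix u w"
    using d addrs_prefix_closed[OF w take_is_prefix] take_is_prefix unfolding u_def by auto
  show "d \<le> lab_at S w"
    using cert_props(4)[OF u(1,2) w u(4)] d u(3) unfolding u_def by fastforce
qed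

lemma lab_le_cert_label:
  assumes w: "w \<in> A"
  shows "lab_at S w \<le> cert_label S (cert S) w"
proof (cases "lab_at S w = 0")
  case False
  define d where "d = lab_at S w"
  define u where "u = take d w"
  have d: "1 \<le> d" "d \<le> length w" using False lab_le_depth[OF w] unfolding d_def by auto
  have u: "u \<in> A" "u \<noteq> []" "length u = d" "prefix u w"
    using d addrs_prefix_closed[OF w take_is_prefix] take_is_prefix unfolding u_def by auto
  define c where "c = cert S u"
  have c: "c \<in> A" "prefix u c" "lab_at S c < d"
    using cert_props[OF u(1,2)] u(3) unfolding c_def by auto
  have "pos S w < pos S c"
  proof (rule ccontr)
    assume "\<not> pos S w < pos S c"
    then consider "pos S c < pos S w" | "c = w" using pos_inj[OF c(1) w] by fastforce
    then show False
    proof cases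
      case 1
      then show False using label_ge_before[OF u(1) w u(4) _ c(1) _ c(2)] c(3) u(3)
        unfolding d_def by simp
    qed (use c(3) d_def in simp)
  qed
  then show ?thesis using cert_label_ge[OF d] unfolding c_def u_def d_def by simp
qed simp

lemma lab_eq_cert_label: "w \<in> A \<Longrightarrow> lab_at S w = cert_label S (cert S) w"
  using cert_label_le_lab lab_le_cert_label by (simp add: antisym)

end

text \<open>The properties of certificates proved in \<open>sticky_tree\<close>, for an arbitrary map \<open>F\<close> on an
  unlabelled tree.\<close>
locale cert_system =
  fixes T :: ltree and F :: "nat list \<Rightarrow> nat list"
  assumes F_mem: "u \<in> set (addrs T) \<Longrightarrow> u \<noteq> [] \<Longrightarrow> F u \<in> set (addrs T)"
    and prefix_F: "u \<in> set (addrs T) \<Longrightarrow> u \<noteq> [] \<Longrightarrow> prefix u (F u)"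
    and F_nested: "u \<in> set (addrs T) \<Longrightarrow> u \<noteq> [] \<Longrightarrow> u' \<in> set (addrs T) \<Longrightarrow> u' \<noteq> [] \<Longrightarrow>
      pos T u < pos T u' \<Longrightarrow> pos T u' \<le> pos T (F u) \<Longrightarrow> pos T (F u') \<le> pos T (F u)"
begin

abbreviation "A \<equiv> set (addrs T)"
abbreviation "S \<equiv> relabel T (cert_label T F)"

lemma cert_label_F_less:
  assumes u: "u \<in> A" "u \<noteq> []"
  shows "cert_label T F (F u) < length u"
proof -
  define v where "v = F u"
  have v: "v \<in> A" "prefix u v" using F_mem[OF u] prefix_F[OF u] unfolding v_def by auto
  have lt: "d < length u" if d: "1 \<le> d" "d \<le> length v" "pos T v < pos T (F (take d v))" for d
  proof (rule ccontr)
    assume "\<not> d < length u"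
    define u' where "u' = take d v"
    have u': "u' \<in> A" "length u' = d" "prefix u u'" "prefix u' v"
      using addrs_prefix_closed[OF v(1) take_is_prefix] prefix_take_mono[OF v(2)] take_is_prefix d
        \<open>\<not> d < length u\<close> unfolding u'_def by auto
    show False
    proof (cases "d = length u")
      case True
      then have "u' = u" using prefix_take_length[OF u'(3)] u'(2) by simp
      then show False using d(3) unfolding u'_def v_def by simp
    next
      case False
      then have "pos T u < pos T u'" using prefix_pos_less[OF u(1) u'(1,3)] u'(2) by auto
      moreover have "pos T u' \<le> pos T v" using prefix_pos_le[OF u'(1) v(1) u'(4)] .
      moreover have "u' \<noteq> []" using u'(2) d by auto
      ultimately have "pos T (F u') \<le> pos T v" using F_nested[OF u u'(1)] unfolding v_def by simp
      then show False using d(3) unfolding u'_def by simp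
    qed
  qed
  then have "cert_label T F v \<le> length u - 1"
    unfolding cert_label_le_iff
  proof (intro allI impI)
    fix d assume "1 \<le> d \<and> d \<le> length v \<and> pos T v < pos T (F (take d v))"
    then show "d \<le> length u - 1" using lt[of d] by linarith
  qed
  moreover have "length u \<noteq> 0" using u(2) by simp
  ultimately show ?thesis unfolding v_def by linarith
qed

lemma cert_label_ge_if_before_F:
  assumes "u \<in> A" "u \<noteq> []" "prefix u w" "pos T w < pos T (F u)"
  shows "length u \<le> cert_label T F w"
  using cert_label_ge[of "length u" w T F] prefix_take_length[OF assms(3)] prefix_length_le[OF assms(3)]
    assms(2,4) by (simp add: Suc_le_eq)

lemma lab_at_S: "w \<in> A \<Longrightarrow> lab_at S w = cert_label T F w"
  by (rule lab_at_relabel)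

lemma pos_S [simp]: "pos S = pos T"
  unfolding pos_def[abs_def] by simp

lemma cert_S:
  assumes u: "u \<in> A" "u \<noteq> []"
  shows "cert S u = F u"
proof -
  define P where "P = (\<lambda>v. prefix u v \<and> lab_at S v < length u)"
  have "P (F u)"
    unfolding P_def using prefix_F[OF u] cert_label_F_less[OF u] lab_at_S F_mem[OF u] by simp
  then have y: "hd (filter P (addrs S)) \<in> A" "P (hd (filter P (addrs S)))"
      "pos T (hd (filter P (addrs S))) \<le> pos T (F u)"
    using hd_filter_pos[of "F u" S P] F_mem[OF u] by auto
  have "\<not> pos T (hd (filter P (addrs S))) < pos T (F u)"
    using cert_label_ge_if_before_F[OF u] y(1,2) lab_at_S unfolding P_def by fastforce
  then have "hd (filter P (addrs S)) = F u" using pos_inj y(1,3) F_mem[OF u] by fastforce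
  then show ?thesis unfolding cert_def P_def .
qed

lemma sticky_S: "sticky S"
  unfolding sticky_def addrs_relabel
proof (intro conjI ballI impI allI)
  fix u assume "u \<in> A"
  then show "lab_at S u \<le> length u" using lab_at_S cert_label_le by simp
next
  fix u assume u: "u \<in> A" "u \<noteq> []"
  show "\<exists>v\<in>A. prefix u v \<and> lab_at S v < length u"
    using F_mem[OF u] prefix_F[OF u] cert_label_F_less[OF u] lab_at_S[OF F_mem[OF u]] by auto
next
  fix u v w assume u: "u \<in> A" and v: "v \<in> A" and uv: "prefix u v \<and> lab_at S v = length u"
    and w: "w \<in> set (takeWhile (\<lambda>x. x \<noteq> v) (addrs T))" and uw: "prefix u w"
  show "length u \<le> lab_at S w"
  proof (cases "u = []")
    case False
    have lv: "cert_label T F v = length u" using uv lab_at_S[OF v] by simp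
    then have "pos T v < pos T (F u)"
      using cert_label_nonzero[of T F v] prefix_take_length[of u v] uv False by simp
    moreover have "w \<in> A" "pos T w < pos T v" using mem_takeWhile_pos[OF v] w by auto
    ultimately show ?thesis using cert_label_ge_if_before_F[OF u False uw] lab_at_S by simp
  qed simp
qed

end

section \<open>From sticky trees to Tamari intervals\<close>

text \<open>Non-root nodes are numbered \<open>0, \<dots>, edges S - 1\<close> in prefix order; \<open>cert_index S i\<close> is the
  number of the certificate of node \<open>i\<close>.\<close>
definition cert_index :: "ltree \<Rightarrow> nat \<Rightarrow> nat" where
  "cert_index S i = pos S (cert S (addrs S ! Suc i)) - 1"

context sticky_tree
begin

lemma cert_index_props:
  assumes "i < edges S"
  shows "i \<le> cert_index S i" "cert_index S i < edges S"
    "pos S (cert S (addrs S ! Suc i)) = Suc (cert_index S i)"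
proof -
  note node = nonroot_nth[OF assms]
  have "Suc i \<le> pos S (cert S (addrs S ! Suc i))"
    using cert_pos_in_subtree(1)[OF node(1,2)] node(3) by simp
  moreover have "pos S (cert S (addrs S ! Suc i)) < Suc (edges S)"
    using pos_lt[OF cert_props(1)[OF node(1,2)]] nnodes_eq_Suc_edges by simp
  ultimately show "i \<le> cert_index S i" "cert_index S i < edges S"
    "pos S (cert S (addrs S ! Suc i)) = Suc (cert_index S i)"
    unfolding cert_index_def by auto
qed

lemma cert_eq_nth_iff:
  assumes "i < edges S" "j < edges S"
  shows "cert S (addrs S ! Suc i) = addrs S ! Suc j \<longleftrightarrow> cert_index S i = j"
proof
  assume "cert S (addrs S ! Suc i) = addrs S ! Suc j"
  then show "cert_index S i = j"
    using cert_index_props(3)[OF assms(1)] nonroot_nth(3)[OF assms(2)] by simp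
next
  assume "cert_index S i = j"
  then have "pos S (cert S (addrs S ! Suc i)) = pos S (addrs S ! Suc j)"
    using cert_index_props(3)[OF assms(1)] nonroot_nth(3)[OF assms(2)] by simp
  then show "cert S (addrs S ! Suc i) = addrs S ! Suc j"
    using pos_inj cert_props(1)[OF nonroot_nth(1,2)[OF assms(1)]] nonroot_nth(1)[OF assms(2)] by blast
qed

lemma nested_cert_index: "nested 0 (edges S) (cert_index S)"
  unfolding nested_def
proof (rule conjI; intro allI impI)
  fix i assume "0 \<le> i \<and> i < edges S"
  then show "i \<le> cert_index S i \<and> cert_index S i < edges S" using cert_index_props by simp
next
  fix i i' assume h: "0 \<le> i \<and> i < edges S \<and> i < i' \<and> i' \<le> cert_index S i"
  then have i': "i' < edges S" using cert_index_props(2)[of i] by simp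
  have "pos S (cert S (addrs S ! Suc i')) \<le> pos S (cert S (addrs S ! Suc i))"
    using cert_nested[OF nonroot_nth(1,2)[of i] nonroot_nth(1,2)[OF i']] nonroot_nth(3)[OF i']
      nonroot_nth(3)[of i] cert_index_props(3)[of i] h by simp
  then show "cert_index S i' \<le> cert_index S i"
    using cert_index_props(3)[of i] cert_index_props(3)[OF i'] h by simp
qed

lemma cnt_eq_preimage_count:
  assumes j: "j < edges S"
  shows "cnt S (addrs S ! Suc j) = preimage_count (cert_index S) 0 (edges S) j"
proof -
  have nodes: "addrs S = [] # map (\<lambda>i. addrs S ! Suc i) [0..<edges S]"
    using addrs_root_first[of S] tl_addrs[of S] by simp
  have "cnt S (addrs S ! Suc j) = length (filter (\<lambda>u. u \<noteq> [] \<and> cert S u = addrs S ! Suc j)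
      (map (\<lambda>i. addrs S ! Suc i) [0..<edges S]))"
    unfolding cnt_def by (subst nodes) simp
  also have "\<dots> = length (filter (\<lambda>i. addrs S ! Suc i \<noteq> [] \<and>
      cert S (addrs S ! Suc i) = addrs S ! Suc j) [0..<edges S])"
    by (simp add: filter_map comp_def)
  also have "\<dots> = preimage_count (cert_index S) 0 (edges S) j"
    unfolding preimage_count_def using nonroot_nth(2) cert_eq_nth_iff[OF _ j]
    by (intro arg_cong[where f=length] filter_cong) auto
  finally show ?thesis .
qed

lemma Dw_eq_nest_word: "Dw S = nest_word 0 (edges S) (cert_index S)"
proof -
  have "Dw S = concat (map (\<lambda>j. U # replicate (cnt S (addrs S ! Suc j)) Dn) [0..<edges S])"
    unfolding Dw_def tl_addrs by (simp add: comp_def)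
  also have "\<dots> = nest_word 0 (edges S) (cert_index S)"
    unfolding nest_word_def by (rule concat_map_cong_upt) (simp add: cnt_eq_preimage_count)
  finally show ?thesis .
qed

lemma match_lengths_Dw: "match_lengths (Dw S) (map (\<lambda>i. 2 * (cert_index S i - i)) [0..<edges S])"
  using match_lengths_nest_word[OF nested_cert_index] Dw_eq_nest_word by simp

text \<open>The Tamari inequality at the edge into a node says that its certificate lies in its subtree.\<close>
lemma Dw_Ew_in_tamari_intervals: "(Dw S, Ew S) \<in> tamari_intervals (edges S)"
proof -
  have tam: "ellD (Dw S) (k + 1) \<le> ellD (Ew S) (k + 1)" if k: "k < edges S" for k
  proof -
    note node = nonroot_nth[OF k]
    have "cert_index S k - k \<le> nnodes (subtree_at S (addrs S ! Suc k)) - 1"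
      using cert_pos_in_subtree(2)[OF node(1,2)] cert_index_props(3)[OF k] node(3) by simp
    then show ?thesis
      using match_lengths_ellD[OF match_lengths_Dw, of k] ellD_Ew[OF k] k by simp
  qed
  have "tamari_le (edges S) (Dw S) (Ew S)"
    unfolding tamari_le_def
  proof
    fix i assume "i \<in> {1..edges S}"
    then obtain k where "i = k + 1" "k < edges S" by (cases i) auto
    then show "ellD (Dw S) i \<le> ellD (Ew S) i" using tam by simp
  qed
  moreover have "dyck (edges S) (Dw S)" "dyck (edges S) (Ew S)"
    using match_lengths_Dw bal_Ew count_U_Ew nnodes_eq_Suc_edges
    unfolding dyck_iff_bal match_lengths_def by simp_all
  ultimately show ?thesis unfolding tamari_intervals_def by simp
qed

end

lemma cert_index_eq_if_Dw_eq:
  assumes "sticky S1" "sticky S2" "Dw S1 = Dw S2" "edges S1 = edges S2" "i < edges S1"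
  shows "cert_index S1 i = cert_index S2 i"
proof -
  interpret S1: sticky_tree S1 using assms(1) by unfold_locales
  interpret S2: sticky_tree S2 using assms(2) by unfold_locales
  have "match_lengths (Dw S1) (map (\<lambda>i. 2 * (cert_index S2 i - i)) [0..<edges S2])"
    using S2.match_lengths_Dw assms(3) by simp
  then have "map (\<lambda>i. 2 * (cert_index S1 i - i)) [0..<edges S1] =
      map (\<lambda>i. 2 * (cert_index S2 i - i)) [0..<edges S2]"
    by (rule match_lengths_unique[OF S1.match_lengths_Dw])
  from arg_cong[OF this, of "\<lambda>xs. xs ! i"]
  have "cert_index S1 i - i = cert_index S2 i - i" using assms(4,5) by simp
  then show ?thesis
    using S1.cert_index_props(1)[OF assms(5)] S2.cert_index_props(1)[of i] assms(4,5) by simp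
qed

lemma sticky_eq_if_words_eq:
  assumes "sticky S1" "sticky S2" "Dw S1 = Dw S2" "Ew S1 = Ew S2"
  shows "S1 = S2"
proof -
  interpret S1: sticky_tree S1 using assms(1) by unfold_locales
  interpret S2: sticky_tree S2 using assms(2) by unfold_locales
  have addrs: "addrs S1 = addrs S2" using Ew_eq_imp_addrs_eq[OF assms(4)] .
  have edges: "edges S1 = edges S2" unfolding edges_def using addrs by simp
  have pos: "pos S1 = pos S2" using pos_addrs[OF addrs] .
  have index: "cert_index S1 i = cert_index S2 i" if "i < edges S1" for i
    using cert_index_eq_if_Dw_eq[OF assms(1-3) edges that] .
  have cert: "cert S1 u = cert S2 u" if u: "u \<in> set (addrs S1)" "u \<noteq> []" for u
  proof -
    obtain k where k: "k < edges S1" "u = addrs S1 ! Suc k" using nonroot_obtain[OF u] by blast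
    define j where "j = cert_index S1 k"
    have j: "j < edges S1" using S1.cert_index_props(2)[OF k(1)] unfolding j_def .
    have "cert S1 u = addrs S1 ! Suc j"
      using S1.cert_eq_nth_iff[OF k(1) j] k(2) unfolding j_def by simp
    moreover have "cert S2 u = addrs S2 ! Suc j"
      using S2.cert_eq_nth_iff[of k j] k j index[OF k(1)] addrs edges unfolding j_def by simp
    ultimately show ?thesis using addrs by simp
  qed
  have "lab_at S1 w = lab_at S2 w" if w: "w \<in> set (addrs S1)" for w
  proof -
    have "cert S1 (take d w) = cert S2 (take d w)" if "1 \<le> d" "d \<le> length w" for d
      using cert[OF addrs_prefix_closed[OF w take_is_prefix], of d] that by (cases w) auto
    then have "cert_label S1 (cert S1) w = cert_label S2 (cert S2) w"
      using pos by (intro cert_label_cong) auto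
    then show ?thesis using S1.lab_eq_cert_label[OF w] S2.lab_eq_cert_label w addrs by simp
  qed
  then show ?thesis using Ew_eq_imp_eq[OF assms(4)] by blast
qed

section \<open>From Tamari intervals to sticky trees\<close>

lemma cert_system_of_nested:
  assumes N: "nested 0 (edges T) f"
    and inside: "\<And>k. k < edges T \<Longrightarrow> f k < k + nnodes (subtree_at T (addrs T ! Suc k))"
  shows "cert_system T (\<lambda>u. addrs T ! Suc (f (pos T u - 1)))"
proof -
  define F where "F u = addrs T ! Suc (f (pos T u - 1))" for u
  have node: "\<exists>k < edges T. pos T u = Suc k \<and> F u \<in> set (addrs T) \<and> pos T (F u) = Suc (f k)"
    if u: "u \<in> set (addrs T)" "u \<noteq> []" for u
  proof -
    obtain k where k: "k < edges T" "u = addrs T ! Suc k" using nonroot_obtain[OF u] .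
    then have "f k < edges T" using nestedD(2)[OF N] by simp
    then show ?thesis
      using k nonroot_nth[OF k(1)] nonroot_nth(1,3)[of "f k" T] unfolding F_def by auto
  qed
  have "cert_system T F"
  proof
    fix u assume u: "u \<in> set (addrs T)" "u \<noteq> []"
    then obtain k where k: "k < edges T" "pos T u = Suc k" "F u \<in> set (addrs T)"
      "pos T (F u) = Suc (f k)" using node by blast
    show "F u \<in> set (addrs T)" using k(3) .
    show "prefix u (F u)"
      using prefix_iff_pos_range[OF u(1) k(3)] k nestedD(1)[OF N _ k(1)] inside[OF k(1)]
        nth_pos[OF u(1)] by simp
    fix u' assume u': "u' \<in> set (addrs T)" "u' \<noteq> []" and "pos T u < pos T u'" "pos T u' \<le> pos T (F u)"
    moreover obtain k' where "pos T u' = Suc k'" "pos T (F u') = Suc (f k')" using node[OF u'] by blast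
    ultimately show "pos T (F u') \<le> pos T (F u)" using nestedD(3)[OF N _ k(1)] k by simp
  qed
  then show ?thesis unfolding F_def .
qed

lemma tamari_interval_has_sticky_tree:
  assumes "(D, E) \<in> tamari_intervals n"
  obtains S where "sticky S" "edges S = n" "Dw S = D" "Ew S = E"
proof -
  have D: "bal D" "count_list D U = n" and E: "bal E" "count_list E U = n"
    and le: "\<And>i. i \<in> {1..n} \<Longrightarrow> ellD D i \<le> ellD E i"
    using assms unfolding tamari_intervals_def tamari_le_def dyck_iff_bal by auto
  obtain T where T: "Ew T = E" using bal_imp_Ew[OF E(1)] by blast
  have eT: "edges T = n" using count_U_Ew[of T] T E(2) nnodes_eq_Suc_edges[of T] by simp
  obtain L where L: "match_lengths D L" using match_lengths_exists[OF D(1)] by blast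
  have lL: "length L = n" using L D(2) unfolding match_lengths_def by simp
  define f where "f i = i + L ! i div 2" for i
  have "L = map (\<lambda>i. 2 * (f i - i)) [0..<n]"
    using lL match_lengths_even[OF L] unfolding f_def by (intro nth_equalityI) auto
  then have N: "nested 0 n f" and DW: "D = nest_word 0 n f"
    using bal_eq_nest_word[OF D(1), of f 0 n] L unfolding f_def by auto
  have "f k < k + nnodes (subtree_at T (addrs T ! Suc k))" if k: "k < n" for k
  proof -
    have "ellD D (k + 1) = 2 * (f k - k)"
      using match_lengths_ellD[OF L, of k] \<open>L = _\<close> k by simp
    then have "f k - k \<le> nnodes (subtree_at T (addrs T ! Suc k)) - 1"
      using le[of "k + 1"] ellD_Ew[of k T] k eT T by simp
    moreover have "0 < nnodes (subtree_at T (addrs T ! Suc k))" by simp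
    ultimately show ?thesis using nestedD(1)[OF N _ k] by linarith
  qed
  then interpret cert_system T "\<lambda>u. addrs T ! Suc (f (pos T u - 1))"
    using cert_system_of_nested N eT by simp
  interpret S: sticky_tree S by unfold_locales (rule sticky_S)
  have eS: "edges S = n" using eT unfolding edges_def by simp
  have "cert_index S i = f i" if i: "i < n" for i
    using S.cert_eq_nth_iff[of i "f i"] cert_S[OF nonroot_nth(1,2)[of i T]] nonroot_nth(3)[of i T]
      nestedD(2)[OF N _ i] i eS eT by simp
  then have "Dw S = D" using S.Dw_eq_nest_word nest_word_cong DW eS by metis
  then show ?thesis using that sticky_S eS T by simp
qed

theorem mainTheorem11:
  fixes n :: nat
  assumes "n \<ge> 1"
  shows "bij_betw (\<lambda>S. (Dw S, Ew S)) (sticky_trees n) (tamari_intervals n)"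
  unfolding bij_betw_def
proof
  show "inj_on (\<lambda>S. (Dw S, Ew S)) (sticky_trees n)"
    by (rule inj_onI) (auto simp: sticky_trees_def intro: sticky_eq_if_words_eq)
  show "(\<lambda>S. (Dw S, Ew S)) ` sticky_trees n = tamari_intervals n"
  proof
    show "(\<lambda>S. (Dw S, Ew S)) ` sticky_trees n \<subseteq> tamari_intervals n"
      using sticky_tree.Dw_Ew_in_tamari_intervals unfolding sticky_trees_def sticky_tree_def by auto
    show "tamari_intervals n \<subseteq> (\<lambda>S. (Dw S, Ew S)) ` sticky_trees n"
    proof
      fix I assume "I \<in> tamari_intervals n"
      then obtain D E S where "I = (D, E)" "sticky S" "edges S = n" "Dw S = D" "Ew S = E"
        using tamari_interval_has_sticky_tree by (metis surj_pair)
      then show "I \<in> (\<lambda>S. (Dw S, Ew S)) ` sticky_trees n" unfolding sticky_trees_def by auto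
    qed
  qed
qed

end
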